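(* Let $d\ge 2$ and $x_0\in\mathbb{R}^d$. Then $$\{\text{block unimodal distributions on }\mathcal{D}_0\text{ about }x_0\}\subsetneq\{\text{OU distributions on }\mathcal{D}_0\text{ about }x_0\}\subsetneq\{\text{star unimodal distributions on }\mathcal{D}_0\text{ about }x_0\}.$$
   Context: $\mathcal{D}_0=\{x\in\mathbb{R}^d:x\ge x_0\}$ (componentwise). All convex hulls below are closed with respect to weak convergence, and uniform distributions are on sets of finite positive Lebesgue measure. A distribution on $\mathcal{D}_0$ is block unimodal about $x_0$ if it lies in the closed convex hull of the uniform distributions on rectangles contained in $\mathcal{D}_0$ that contain $x_0$ and have edges parallel to the coordinate axes. A set $K$ is star-shaped about $x_0$ if for each $x\in K$ the segment joining $x$ and $x_0$ lies in $K$; a distribution on $\mathcal{D}_0$ is star unimodal about $x_0$ if it lies in the closed convex hull of the uniform distributions on subsets of $\mathcal{D}_0$ that are star-shaped about $x_0$. A set $K\subset\mathcal{D}_0$ is OU about $x_0$ if $x\in K$ and $x\ge x'\ge x_0$ imply $x'\in K$; a distribution on $\mathcal{D}_0$ is OU about $x_0$ if it lies in the closed convex hull of the uniform distributions on subsets of $\mathcal{D}_0$ that are OU about $x_0$. *)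

theory Defs
  imports "HOL-Probability.Probability"
begin

type_synonym 'n pt = "real ^ 'n"

definition orthant :: "'n::finite pt \<Rightarrow> 'n pt set" where
  "orthant x0 = {x. \<forall>i. x0 $ i \<le> x $ i}"

definition distr_on :: "'n::finite pt \<Rightarrow> 'n pt measure \<Rightarrow> bool" where
  "distr_on x0 M \<longleftrightarrow> prob_space M \<and> sets M = sets borel \<and> measure M (orthant x0) = 1"

definition uniform_on :: "'n::finite pt set \<Rightarrow> 'n pt measure" where
  "uniform_on K = measure_of UNIV (sets borel)
      (\<lambda>A. emeasure lebesgue (A \<inter> K) / emeasure lebesgue K)"

definition admissible_set :: "'n::finite pt set \<Rightarrow> bool" where
  "admissible_set K \<longleftrightarrow> K \<in> sets lebesgue \<and> 0 < emeasure lebesgue K \<and> emeasure lebesgue K < \<infinity>"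

definition weak_conv :: "(nat \<Rightarrow> 'n::finite pt measure) \<Rightarrow> 'n pt measure \<Rightarrow> bool" where
  "weak_conv Ms M \<longleftrightarrow> (\<forall>f :: 'n pt \<Rightarrow> real. continuous_on UNIV f \<and> bounded (range f) \<longrightarrow>
      (\<lambda>k. integral\<^sup>L (Ms k) f) \<longlonglongrightarrow> integral\<^sup>L M f)"

definition mixtures :: "'n::finite pt measure set \<Rightarrow> 'n pt measure set" where
  "mixtures S = {N. prob_space N \<and> sets N = sets borel \<and>
      (\<exists>(k::nat) (c::nat \<Rightarrow> real) (Ms::nat \<Rightarrow> 'n pt measure).
         (\<forall>i<k. 0 \<le> c i \<and> Ms i \<in> S) \<and> (\<Sum>i<k. c i) = 1 \<and>
         (\<forall>A\<in>sets borel. measure N A = (\<Sum>i<k. c i * measure (Ms i) A)))}"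

text \<open>Closed convex hull w.r.t. weak convergence (the weak topology on probability
  measures on R^d is metrizable, so the closure is the sequential closure).\<close>
definition closed_hull :: "'n::finite pt measure set \<Rightarrow> 'n pt measure set" where
  "closed_hull S = {M. prob_space M \<and> sets M = sets borel \<and>
      (\<exists>Ms. (\<forall>k. Ms k \<in> mixtures S) \<and> weak_conv Ms M)}"

definition is_rectangle :: "'n::finite pt set \<Rightarrow> bool" where
  "is_rectangle R \<longleftrightarrow> (\<exists>a b. R = {x. \<forall>i. a $ i \<le> x $ i \<and> x $ i \<le> b $ i})"

definition star_shaped_about :: "'n::finite pt \<Rightarrow> 'n pt set \<Rightarrow> bool" where
  "star_shaped_about x0 K \<longleftrightarrow> (\<forall>x\<in>K. closed_segment x0 x \<subseteq> K)"

definition OU_set :: "'n::finite pt \<Rightarrow> 'n pt set \<Rightarrow> bool" where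
  "OU_set x0 K \<longleftrightarrow> K \<subseteq> orthant x0 \<and>
     (\<forall>x\<in>K. \<forall>x'. (\<forall>i. x0 $ i \<le> x' $ i \<and> x' $ i \<le> x $ i) \<longrightarrow> x' \<in> K)"

definition block_unimodal :: "'n::finite pt \<Rightarrow> 'n pt measure set" where
  "block_unimodal x0 = {M. distr_on x0 M \<and> M \<in> closed_hull
      (uniform_on ` {R. admissible_set R \<and> is_rectangle R \<and> R \<subseteq> orthant x0 \<and> x0 \<in> R})}"

definition star_unimodal :: "'n::finite pt \<Rightarrow> 'n pt measure set" where
  "star_unimodal x0 = {M. distr_on x0 M \<and> M \<in> closed_hull
      (uniform_on ` {K. admissible_set K \<and> K \<subseteq> orthant x0 \<and> star_shaped_about x0 K})}"

definition OU_unimodal :: "'n::finite pt \<Rightarrow> 'n pt measure set" where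
  "OU_unimodal x0 = {M. distr_on x0 M \<and> M \<in> closed_hull
      (uniform_on ` {K. admissible_set K \<and> OU_set x0 K})}"

end

(*
  Both inclusions come from the generating sets: a rectangle in D_0 containing x0 is OU about
  x0, an OU set is star-shaped about x0, and the closed convex hull is monotone.

  For strictness fix two coordinates i \<noteq> j and test against continuous bounded functions g
  that are signed sums of small bumps placed at the points x0 + (1/2, ..., 1/2) + s e_i + t e_j.
  A mixture integrates g linearly and weak limits preserve signs, so if the integral of g over
  every generating set is nonnegative, the same holds for every distribution in the closed
  convex hull. Translating the bumps to the origin, that integral is nonnegative as soon as the
  corresponding signed sum of indicators of the set is nonnegative near every point.
  The mixed second difference at the corners (0,0), (1,0), (0,1), (1,1) of a unit square is
  nonnegative for every rectangle anchored below x0 but equals -1 for the L-shaped set obtained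
  by removing the upper corner cube from [x0, x0 + 2]; the difference between (0,1) and (2,1) is
  nonnegative for every OU set but equals -1 for the wedge {x_j - x0_j \<le> x_i - x0_i} in
  [x0, x0 + 3]. So the uniform distribution on the L-shaped set is OU but not block unimodal,
  and that on the wedge is star unimodal but not OU.
*)

theory Submission
  imports Defs
begin

section \<open>Measures with a Lebesgue density\<close>

definition lebesgue_density :: "'a::euclidean_space measure \<Rightarrow> ('a \<Rightarrow> real) \<Rightarrow> bool" where
  "lebesgue_density M f \<longleftrightarrow> sets M = sets borel \<and> f \<in> borel_measurable lebesgue \<and> (\<forall>x. 0 \<le> f x) \<and>
     (\<forall>A\<in>sets borel. emeasure M A = (\<integral>\<^sup>+x. ennreal (f x) * indicator A x \<partial>lebesgue))"

lemma integral_lebesgue_density: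
  fixes g :: "'a::euclidean_space \<Rightarrow> real"
  assumes M: "lebesgue_density M f" and g: "g \<in> borel_measurable borel"
  shows "integral\<^sup>L M g = (\<integral>x. f x * g x \<partial>lebesgue)"
proof -
  have f: "f \<in> borel_measurable lebesgue" "\<And>x. 0 \<le> f x" and sM: "sets M = sets borel"
    using M by (auto simp: lebesgue_density_def)
  have "integral\<^sup>L M g = integral\<^sup>L (density lebesgue f) g"
  proof (rule integral_subalgebra)
    show "g \<in> borel_measurable M"
      using g sM by (simp cong: measurable_cong_sets)
    show "sets M \<subseteq> sets (density lebesgue f)"
      using sM by force
    show "space M = space (density lebesgue f)"
      using sets_eq_imp_space_eq[OF sM] by simp
    show "emeasure M A = emeasure (density lebesgue f) A" if "A \<in> sets M" for A
    proof -
      have "A \<in> sets lebesgue"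
        using that sM by force
      then show ?thesis
        using M that f sM by (simp add: lebesgue_density_def emeasure_density)
    qed
  qed
  also have "\<dots> = (\<integral>x. f x * g x \<partial>lebesgue)"
    using f g by (simp add: integral_density measurable_completion)
  finally show ?thesis .
qed

lemma integrable_lebesgue_density:
  assumes M: "lebesgue_density M f" and "finite_measure M"
  shows "integrable lebesgue f"
proof (rule integrableI_nn_integral_finite)
  show "f \<in> borel_measurable lebesgue" "AE x in lebesgue. 0 \<le> f x"
    using M by (auto simp: lebesgue_density_def)
  have "(\<integral>\<^sup>+x. ennreal (f x) \<partial>lebesgue) = emeasure M UNIV"
    using M by (simp add: lebesgue_density_def)
  also have "\<dots> = ennreal (measure M UNIV)"
    using M \<open>finite_measure M\<close>
    by (simp add: lebesgue_density_def finite_measure.emeasure_eq_measure)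
  finally show "(\<integral>\<^sup>+x. ennreal (f x) \<partial>lebesgue) = ennreal (measure M UNIV)" .
qed

lemma integrable_lebesgue_density_mult:
  fixes g :: "'a::euclidean_space \<Rightarrow> real"
  assumes M: "lebesgue_density M f" "finite_measure M"
    and g: "g \<in> borel_measurable borel" and B: "\<And>x. \<bar>g x\<bar> \<le> B"
  shows "integrable lebesgue (\<lambda>x. f x * g x)"
proof (rule Bochner_Integration.integrable_bound)
  show "integrable lebesgue (\<lambda>x. B * f x)"
    using integrable_lebesgue_density[OF M] by simp
  show "(\<lambda>x. f x * g x) \<in> borel_measurable lebesgue"
    using M g by (intro borel_measurable_times) (simp_all add: lebesgue_density_def measurable_completion)
  have "\<bar>f x * g x\<bar> \<le> \<bar>B * f x\<bar>" for x
  proof -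
    have "\<bar>g x\<bar> \<le> \<bar>B\<bar>"
      using B[of x] by linarith
    from mult_right_mono[OF this abs_ge_zero[of "f x"]] show ?thesis
      by (simp add: abs_mult mult.commute)
  qed
  then show "AE x in lebesgue. norm (f x * g x) \<le> norm (B * f x)"
    by simp
qed

lemma lebesgue_density_mixture:
  assumes N: "finite_measure N" "sets N = sets borel"
    and M: "\<And>i. i < k \<Longrightarrow> lebesgue_density (M i) (F i)" "\<And>i. i < k \<Longrightarrow> finite_measure (M i)"
    and c: "\<And>i. i < k \<Longrightarrow> 0 \<le> c i"
    and mix: "\<And>A. A \<in> sets borel \<Longrightarrow> measure N A = (\<Sum>i<k. c i * measure (M i) A)"
  shows "lebesgue_density N (\<lambda>x. \<Sum>i<k. c i * F i x)"
  unfolding lebesgue_density_def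
proof (intro conjI ballI allI)
  have F: "F i \<in> borel_measurable lebesgue" "0 \<le> F i x" if "i < k" for i x
    using M(1)[OF that] by (auto simp: lebesgue_density_def)
  show "(\<lambda>x. \<Sum>i<k. c i * F i x) \<in> borel_measurable lebesgue"
    using F by (intro borel_measurable_sum borel_measurable_times) auto
  show "0 \<le> (\<Sum>i<k. c i * F i x)" for x
    using F c by (intro sum_nonneg) auto
  fix A :: "'a set" assume A: "A \<in> sets borel"
  have "A \<in> sets lebesgue"
    using A by force
  then have Fi: "(\<lambda>x. ennreal (F i x) * indicator A x) \<in> borel_measurable lebesgue" if "i < k" for i
    using F that by (intro borel_measurable_times_ennreal measurable_compose[OF _ measurable_ennreal]
        borel_measurable_indicator) auto
  have "emeasure N A = ennreal (\<Sum>i<k. c i * measure (M i) A)"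
    using A N by (simp add: finite_measure.emeasure_eq_measure mix)
  also have "\<dots> = (\<Sum>i<k. ennreal (c i * measure (M i) A))"
    using c by (intro sum_ennreal[symmetric]) simp
  also have "\<dots> = (\<Sum>i<k. ennreal (c i) * emeasure (M i) A)"
    using M c by (simp add: ennreal_mult finite_measure.emeasure_eq_measure)
  also have "\<dots> = (\<Sum>i<k. \<integral>\<^sup>+x. ennreal (c i) * (ennreal (F i x) * indicator A x) \<partial>lebesgue)"
    using M A Fi by (intro sum.cong refl) (simp add: lebesgue_density_def nn_integral_cmult)
  also have "\<dots> = (\<integral>\<^sup>+x. (\<Sum>i<k. ennreal (c i) * (ennreal (F i x) * indicator A x)) \<partial>lebesgue)"
    by (intro nn_integral_sum[symmetric] borel_measurable_times_ennreal[OF borel_measurable_const Fi]) auto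
  also have "\<dots> = (\<integral>\<^sup>+x. ennreal (\<Sum>i<k. c i * F i x) * indicator A x \<partial>lebesgue)"
  proof (intro nn_integral_cong)
    fix x
    have "(\<Sum>i<k. ennreal (c i) * (ennreal (F i x) * indicator A x))
        = (\<Sum>i<k. ennreal (c i * F i x)) * indicator A x"
      using F c by (simp add: sum_distrib_right ennreal_mult mult.assoc)
    also have "\<dots> = ennreal (\<Sum>i<k. c i * F i x) * indicator A x"
      using F c by (subst sum_ennreal) auto
    finally show "(\<Sum>i<k. ennreal (c i) * (ennreal (F i x) * indicator A x))
        = ennreal (\<Sum>i<k. c i * F i x) * indicator A x" .
  qed
  finally show "emeasure N A = (\<integral>\<^sup>+x. ennreal (\<Sum>i<k. c i * F i x) * indicator A x \<partial>lebesgue)" .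
qed (use N in simp)

lemma integral_mixtures:
  fixes g :: "'n::finite pt \<Rightarrow> real"
  assumes N: "N \<in> mixtures S"
    and S: "\<And>M. M \<in> S \<Longrightarrow> prob_space M" "\<And>M. M \<in> S \<Longrightarrow> \<exists>f. lebesgue_density M f"
    and g: "g \<in> borel_measurable borel" and B: "\<And>x. \<bar>g x\<bar> \<le> B"
  obtains k :: nat and c :: "nat \<Rightarrow> real" and Ms where "\<And>i. i < k \<Longrightarrow> 0 \<le> c i \<and> Ms i \<in> S"
    and "integral\<^sup>L N g = (\<Sum>i<k. c i * integral\<^sup>L (Ms i) g)"
proof -
  obtain k :: nat and c :: "nat \<Rightarrow> real" and Ms where N': "prob_space N" "sets N = sets borel"
    and cMs: "\<forall>i<k. 0 \<le> c i \<and> Ms i \<in> S"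
    and mix: "\<forall>A\<in>sets borel. measure N A = (\<Sum>i<k. c i * measure (Ms i) A)"
    using N unfolding mixtures_def by blast
  have "\<forall>i. \<exists>f. i < k \<longrightarrow> lebesgue_density (Ms i) f"
    using S(2) cMs by blast
  then obtain F where F: "\<And>i. i < k \<Longrightarrow> lebesgue_density (Ms i) (F i)"
    by metis
  have fin: "finite_measure (Ms i)" if "i < k" for i
    using S(1) cMs that prob_space.finite_measure by blast
  have "lebesgue_density N (\<lambda>x. \<Sum>i<k. c i * F i x)"
    using N' F fin cMs mix by (intro lebesgue_density_mixture) (auto simp: prob_space.finite_measure)
  then have "integral\<^sup>L N g = (\<integral>x. (\<Sum>i<k. c i * F i x) * g x \<partial>lebesgue)"
    using g by (rule integral_lebesgue_density)
  also have "\<dots> = (\<integral>x. (\<Sum>i<k. c i * (F i x * g x)) \<partial>lebesgue)"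
    by (simp add: sum_distrib_right mult.assoc)
  also have "\<dots> = (\<Sum>i<k. c i * (\<integral>x. F i x * g x \<partial>lebesgue))"
    by (subst Bochner_Integration.integral_sum)
       (auto intro!: integrable_mult_right integrable_lebesgue_density_mult[OF F fin g B])
  also have "\<dots> = (\<Sum>i<k. c i * integral\<^sup>L (Ms i) g)"
    by (intro sum.cong refl) (simp add: integral_lebesgue_density[OF F g])
  finally show ?thesis
    using that cMs by blast
qed

lemma integral_nonneg_closed_hull:
  fixes g :: "'n::finite pt \<Rightarrow> real"
  assumes M: "M \<in> closed_hull S"
    and S: "\<And>M. M \<in> S \<Longrightarrow> prob_space M" "\<And>M. M \<in> S \<Longrightarrow> \<exists>f. lebesgue_density M f"
    and nonneg: "\<And>M. M \<in> S \<Longrightarrow> 0 \<le> integral\<^sup>L M g"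
    and g: "continuous_on UNIV g" "bounded (range g)"
  shows "0 \<le> integral\<^sup>L M g"
proof -
  obtain Ms where Ms: "\<And>k. Ms k \<in> mixtures S" and "weak_conv Ms M"
    using M unfolding closed_hull_def by blast
  then have lim: "(\<lambda>k. integral\<^sup>L (Ms k) g) \<longlonglongrightarrow> integral\<^sup>L M g"
    using g unfolding weak_conv_def by blast
  obtain B where B: "\<And>x. \<bar>g x\<bar> \<le> B"
    using g(2) unfolding bounded_iff by auto
  have "0 \<le> integral\<^sup>L (Ms k) g" for k
  proof (rule integral_mixtures[OF Ms[of k] S borel_measurable_continuous_onI[OF g(1)] B])
    fix n :: nat and c :: "nat \<Rightarrow> real" and Ns
    assume "\<And>i. i < n \<Longrightarrow> 0 \<le> c i \<and> Ns i \<in> S"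
      and "integral\<^sup>L (Ms k) g = (\<Sum>i<n. c i * integral\<^sup>L (Ns i) g)"
    then show ?thesis
      using nonneg by (auto intro!: sum_nonneg)
  qed
  then show ?thesis
    using LIMSEQ_le_const[OF lim] by blast
qed

lemma closed_hull_inc:
  assumes "M \<in> S" "prob_space M" "sets M = sets borel"
  shows "M \<in> closed_hull S"
proof -
  have "M \<in> mixtures S"
    unfolding mixtures_def using assms
    by (auto intro!: exI[of _ "1::nat"] exI[of _ "\<lambda>_. 1::real"] exI[of _ "\<lambda>_. M"])
  then show ?thesis
    unfolding closed_hull_def weak_conv_def using assms by auto
qed

lemma closed_hull_mono:
  assumes "S \<subseteq> T"
  shows "closed_hull S \<subseteq> closed_hull T"
proof -
  have "mixtures S \<subseteq> mixtures T"
    unfolding mixtures_def using assms by blast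
  then show ?thesis
    unfolding closed_hull_def by blast
qed

section \<open>Uniform distributions\<close>

definition uniform_density :: "'a::euclidean_space set \<Rightarrow> 'a \<Rightarrow> real" where
  "uniform_density K x = indicator K x / measure lebesgue K"

lemma admissible_set_measure:
  assumes "admissible_set K"
  shows "emeasure lebesgue K = ennreal (measure lebesgue K)" and "0 < measure lebesgue K"
proof -
  show eq: "emeasure lebesgue K = ennreal (measure lebesgue K)"
    using assms by (intro emeasure_eq_ennreal_measure) (auto simp: admissible_set_def)
  show "0 < measure lebesgue K"
    using assms unfolding admissible_set_def eq by (simp add: ennreal_less_zero_iff)
qed

lemma emeasure_density_uniform_density:
  assumes K: "admissible_set K" and A: "A \<in> sets lebesgue"
  shows "emeasure (density lebesgue (uniform_density K)) A = emeasure lebesgue (A \<inter> K) / emeasure lebesgue K"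
proof -
  have Kl: "K \<in> sets lebesgue"
    using K by (simp add: admissible_set_def)
  have "emeasure (density lebesgue (uniform_density K)) A
      = (\<integral>\<^sup>+x. ennreal (uniform_density K x) * indicator A x \<partial>lebesgue)"
    using A Kl by (simp add: emeasure_density uniform_density_def)
  also have "\<dots> = (\<integral>\<^sup>+x. indicator (A \<inter> K) x / ennreal (measure lebesgue K) \<partial>lebesgue)"
    using admissible_set_measure(2)[OF K]
    by (intro nn_integral_cong) (auto simp: uniform_density_def indicator_def divide_ennreal[symmetric])
  also have "\<dots> = emeasure lebesgue (A \<inter> K) / emeasure lebesgue K"
    using A Kl by (simp add: nn_integral_divide admissible_set_measure(1)[OF K])
  finally show ?thesis .
qed

(* Identifying uniform_on K with an image measure provides its countable additivity. *)
lemma uniform_on_eq_distr_density: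
  fixes K :: "'n::finite pt set"
  assumes "admissible_set K"
  shows "uniform_on K = distr (density lebesgue (uniform_density K)) borel (\<lambda>x. x)"
  unfolding uniform_on_def distr_def
proof (simp, rule measure_of_eq)
  fix A :: "'n pt set" assume "A \<in> sigma_sets UNIV (sets borel)"
  then have "A \<in> sets borel"
    by (metis sets.sigma_sets_eq space_borel)
  then have "A \<in> sets lebesgue"
    by force
  then show "emeasure lebesgue (A \<inter> K) / emeasure lebesgue K
      = emeasure (density lebesgue (uniform_density K)) A"
    using assms by (simp add: emeasure_density_uniform_density)
qed simp

lemma sets_uniform_on [simp]: "sets (uniform_on K) = sets borel"
  unfolding uniform_on_def by (metis sets.sigma_sets_eq sets_measure_of sets.space_closed space_borel)

lemma emeasure_uniform_on:
  assumes "admissible_set K" and "A \<in> sets borel"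
  shows "emeasure (uniform_on K) A = emeasure lebesgue (A \<inter> K) / emeasure lebesgue K"
proof -
  have "A \<in> sets lebesgue"
    using assms(2) by force
  then show ?thesis
    using assms by (simp add: uniform_on_eq_distr_density emeasure_distr measurable_completion
        emeasure_density_uniform_density)
qed

lemma prob_space_uniform_on:
  assumes "admissible_set K"
  shows "prob_space (uniform_on K)"
proof
  have "emeasure lebesgue K \<noteq> 0" "emeasure lebesgue K < \<infinity>"
    using assms by (auto simp: admissible_set_def)
  then show "emeasure (uniform_on K) (space (uniform_on K)) = 1"
    using assms by (simp add: emeasure_uniform_on sets_eq_imp_space_eq[OF sets_uniform_on])
qed

lemma lebesgue_density_uniform_on:
  assumes K: "admissible_set K"
  shows "lebesgue_density (uniform_on K) (uniform_density K)"
  unfolding lebesgue_density_def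
proof (intro conjI allI ballI)
  have "K \<in> sets lebesgue"
    using K by (simp add: admissible_set_def)
  then show dm: "uniform_density K \<in> borel_measurable lebesgue"
    unfolding uniform_density_def by simp
  show "0 \<le> uniform_density K x" for x
    by (simp add: uniform_density_def)
  fix A :: "'a pt set" assume A: "A \<in> sets borel"
  then have "emeasure (uniform_on K) A = emeasure (density lebesgue (uniform_density K)) A"
    using K by (simp add: uniform_on_eq_distr_density emeasure_distr measurable_completion)
  also have "\<dots> = (\<integral>\<^sup>+x. ennreal (uniform_density K x) * indicator A x \<partial>lebesgue)"
    using A dm by (intro emeasure_density) auto
  finally show "emeasure (uniform_on K) A
      = (\<integral>\<^sup>+x. ennreal (uniform_density K x) * indicator A x \<partial>lebesgue)" .
qed simp

lemma integral_uniform_on: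
  fixes g :: "'n::finite pt \<Rightarrow> real"
  assumes "admissible_set K" and "g \<in> borel_measurable borel"
  shows "integral\<^sup>L (uniform_on K) g = (\<integral>x. indicator K x * g x \<partial>lebesgue) / measure lebesgue K"
  using integral_lebesgue_density[OF lebesgue_density_uniform_on] assms
  by (simp add: uniform_density_def)

lemma distr_on_uniform_on:
  assumes K: "admissible_set K" and "K \<subseteq> orthant x0"
  shows "distr_on x0 (uniform_on K)"
proof -
  have "orthant x0 \<in> sets borel"
    unfolding orthant_def by measurable
  moreover have "orthant x0 \<inter> K = K"
    using assms(2) by blast
  ultimately have "emeasure (uniform_on K) (orthant x0) = 1"
    using K by (auto simp: emeasure_uniform_on admissible_set_def)
  then show ?thesis
    using prob_space_uniform_on[OF K]
    by (simp add: distr_on_def measure_def)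
qed

section \<open>Bump test functions\<close>

definition bump :: "'a::real_normed_vector \<Rightarrow> real" where
  "bump y = max 0 (1/4 - norm y)"

lemma continuous_on_bump: "continuous_on UNIV bump"
  unfolding bump_def by (intro continuous_intros)

lemma bump_nonneg: "0 \<le> bump y"
  by (simp add: bump_def)

lemma bump_le: "bump y \<le> 1/4"
  unfolding bump_def using norm_ge_zero[of y] by (simp add: max_def)

lemma norm_bump_le: "norm (bump y) \<le> 1/4"
  by (metis abs_of_nonneg bump_le bump_nonneg real_norm_def)

lemma bump_eq_0: "1/4 \<le> norm y \<Longrightarrow> bump y = 0"
  by (simp add: bump_def)

lemma borel_measurable_bump: "bump \<in> borel_measurable borel"
  by (rule borel_measurable_continuous_onI[OF continuous_on_bump])

lemma integrable_bump: "integrable lebesgue (bump :: 'a::euclidean_space \<Rightarrow> real)"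
proof (rule integrableI_bounded_set[where A="cball 0 (1/4)" and B="1/4"])
  show "emeasure lebesgue (cball (0::'a) (1/4)) < \<infinity>"
    using emeasure_bounded_finite[of "cball (0::'a) (1/4)"] by simp
  show "AE x in lebesgue. x \<in> cball 0 (1/4) \<longrightarrow> norm (bump x) \<le> 1/4"
    by (intro AE_I2 impI norm_bump_le)
  show "AE x in lebesgue. x \<notin> cball 0 (1/4) \<longrightarrow> bump x = 0"
    by (simp add: bump_eq_0)
qed (auto simp: borel_measurable_bump measurable_completion)

lemma integral_bump_pos: "0 < (\<integral>x. bump x \<partial>(lebesgue :: 'a::euclidean_space measure))"
proof -
  have "0 < 1/8 * measure lebesgue (ball (0::'a) (1/8))"
    using content_ball_pos[of "1/8" "0::'a"] by simp
  also have "\<dots> = (\<integral>x. 1/8 * indicator (ball (0::'a) (1/8)) x \<partial>lebesgue)"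
    by simp
  also have "\<dots> \<le> (\<integral>x. bump x \<partial>(lebesgue :: 'a measure))"
  proof (intro integral_mono integrable_bump integrable_mult_right)
    show "integrable lebesgue (indicator (ball (0::'a) (1/8)) :: 'a \<Rightarrow> real)"
      using emeasure_bounded_finite[of "ball (0::'a) (1/8)"] by (simp add: integrable_indicator_iff)
  qed (auto simp: indicator_def bump_def)
  finally show ?thesis .
qed

lemma
  fixes f :: "'a::euclidean_space \<Rightarrow> real"
  assumes f: "f \<in> borel_measurable lebesgue"
  shows integral_lebesgue_translate: "(\<integral>x. f (t + x) \<partial>lebesgue) = integral\<^sup>L lebesgue f"
    and integrable_lebesgue_translate_iff: "integrable lebesgue (\<lambda>x. f (t + x)) \<longleftrightarrow> integrable lebesgue f"
proof -
  have T: "(\<lambda>x. t + (\<Sum>j\<in>Basis. (1 * (x \<bullet> j)) *\<^sub>R j)) = (+) t"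
    by (simp add: euclidean_representation)
  have distr: "distr lebesgue lebesgue ((+) t) = lebesgue"
    using lebesgue_affine_euclidean[of "\<lambda>_. 1" t] unfolding T by (simp add: density_1)
  have meas: "(+) t \<in> lebesgue \<rightarrow>\<^sub>M lebesgue"
    using lebesgue_affine_measurable[of "\<lambda>_. 1" t] unfolding T by simp
  show "(\<integral>x. f (t + x) \<partial>lebesgue) = integral\<^sup>L lebesgue f"
    using integral_distr[OF meas f] by (simp add: distr)
  show "integrable lebesgue (\<lambda>x. f (t + x)) \<longleftrightarrow> integrable lebesgue f"
    using integrable_distr_eq[OF meas f] by (simp add: distr)
qed

lemma
  fixes K :: "'a::euclidean_space set"
  assumes K: "K \<in> sets lebesgue" "emeasure lebesgue K < \<infinity>"
  shows integrable_indicator_bump_shift: "integrable lebesgue (\<lambda>x. indicator K x * bump (x - p))"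
    and integrable_shifted_indicator_bump: "integrable lebesgue (\<lambda>y. indicator K (p + y) * bump y)"
    and integral_indicator_bump_shift:
      "(\<integral>x. indicator K x * bump (x - p) \<partial>lebesgue) = (\<integral>y. indicator K (p + y) * bump y \<partial>lebesgue)"
proof -
  have bump_shift: "(\<lambda>x. bump (x - p)) \<in> borel_measurable lebesgue"
    using measurable_compose[OF _ borel_measurable_bump, of "\<lambda>x. x - p"]
    by (simp add: measurable_completion)
  then have meas: "(\<lambda>x. indicator K x * bump (x - p)) \<in> borel_measurable lebesgue"
    using K by (intro borel_measurable_times borel_measurable_indicator) auto
  have "integrable lebesgue (\<lambda>x. indicator K x *\<^sub>R bump (x - p))"
    by (rule integrableI_bounded_set_indicator[where B="1/4", OF K(1) bump_shift K(2)])
       (intro AE_I2 impI norm_bump_le)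
  then show int: "integrable lebesgue (\<lambda>x. indicator K x * bump (x - p))"
    by simp
  show "integrable lebesgue (\<lambda>y. indicator K (p + y) * bump y)"
    using int integrable_lebesgue_translate_iff[OF meas, of p] by simp
  show "(\<integral>x. indicator K x * bump (x - p) \<partial>lebesgue) = (\<integral>y. indicator K (p + y) * bump y \<partial>lebesgue)"
    using integral_lebesgue_translate[OF meas, of p] by simp
qed

definition bump_combination :: "nat \<Rightarrow> (nat \<Rightarrow> real) \<Rightarrow> (nat \<Rightarrow> 'a) \<Rightarrow> 'a::real_normed_vector \<Rightarrow> real" where
  "bump_combination n w P x = (\<Sum>l<n. w l * bump (x - P l))"

lemma continuous_on_bump_combination: "continuous_on UNIV (bump_combination n w P)"
  unfolding bump_combination_def
  by (intro continuous_intros continuous_on_compose2[OF continuous_on_bump]) auto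

lemma bounded_bump_combination: "bounded (range (bump_combination n w P))"
  unfolding bounded_iff
proof (intro exI ballI)
  fix z assume "z \<in> range (bump_combination n w P)"
  then obtain x where z: "z = (\<Sum>l<n. w l * bump (x - P l))"
    by (auto simp: bump_combination_def)
  have "norm z \<le> (\<Sum>l<n. \<bar>w l * bump (x - P l)\<bar>)"
    unfolding z real_norm_def by (rule sum_abs)
  also have "\<dots> = (\<Sum>l<n. \<bar>w l\<bar> * bump (x - P l))"
    by (simp add: abs_mult bump_nonneg)
  also have "\<dots> \<le> (\<Sum>l<n. \<bar>w l\<bar> * (1/4))"
    by (intro sum_mono mult_left_mono bump_le) auto
  finally show "norm z \<le> (\<Sum>l<n. \<bar>w l\<bar> * (1/4))" .
qed

lemma integral_indicator_bump_combination:
  fixes K :: "'a::euclidean_space set"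
  assumes K: "K \<in> sets lebesgue" "emeasure lebesgue K < \<infinity>"
  shows "(\<integral>x. indicator K x * bump_combination n w P x \<partial>lebesgue)
       = (\<integral>y. bump y * (\<Sum>l<n. w l * indicator K (P l + y)) \<partial>lebesgue)"
proof -
  have "(\<integral>x. indicator K x * bump_combination n w P x \<partial>lebesgue)
      = (\<integral>x. (\<Sum>l<n. w l * (indicator K x * bump (x - P l))) \<partial>lebesgue)"
    by (simp add: bump_combination_def sum_distrib_left mult_ac)
  also have "\<dots> = (\<Sum>l<n. w l * (\<integral>x. indicator K x * bump (x - P l) \<partial>lebesgue))"
    using integrable_indicator_bump_shift[OF K] by simp
  also have "\<dots> = (\<Sum>l<n. w l * (\<integral>y. indicator K (P l + y) * bump y \<partial>lebesgue))"
    by (simp add: integral_indicator_bump_shift[OF K])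
  also have "\<dots> = (\<integral>y. (\<Sum>l<n. w l * (indicator K (P l + y) * bump y)) \<partial>lebesgue)"
    using integrable_shifted_indicator_bump[OF K] by simp
  also have "\<dots> = (\<integral>y. bump y * (\<Sum>l<n. w l * indicator K (P l + y)) \<partial>lebesgue)"
    by (simp only: sum_distrib_left mult_ac)
  finally show ?thesis .
qed

lemma integral_indicator_bump_combination_nonneg:
  fixes K :: "'a::euclidean_space set"
  assumes K: "K \<in> sets lebesgue" "emeasure lebesgue K < \<infinity>"
    and nonneg: "\<And>y. norm y < 1/4 \<Longrightarrow> 0 \<le> (\<Sum>l<n. w l * indicator K (P l + y))"
  shows "0 \<le> (\<integral>x. indicator K x * bump_combination n w P x \<partial>lebesgue)"
  unfolding integral_indicator_bump_combination[OF K]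
proof (rule Bochner_Integration.integral_nonneg)
  show "0 \<le> bump y * (\<Sum>l<n. w l * indicator K (P l + y))" for y
    using nonneg[of y] bump_nonneg[of y] bump_eq_0[of y] by (cases "norm y < 1/4") auto
qed

lemma integral_indicator_bump_combination_neg:
  fixes K :: "'a::euclidean_space set"
  assumes K: "K \<in> sets lebesgue" "emeasure lebesgue K < \<infinity>"
    and neg: "\<And>y. norm y < 1/4 \<Longrightarrow> (\<Sum>l<n. w l * indicator K (P l + y)) = -1"
  shows "(\<integral>x. indicator K x * bump_combination n w P x \<partial>lebesgue) < 0"
proof -
  have "(\<integral>x. indicator K x * bump_combination n w P x \<partial>lebesgue) = (\<integral>y. - bump y \<partial>(lebesgue :: 'a measure))"
    unfolding integral_indicator_bump_combination[OF K]
  proof (rule Bochner_Integration.integral_cong[OF refl])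
    show "bump y * (\<Sum>l<n. w l * indicator K (P l + y)) = - bump y" for y
      using neg[of y] bump_eq_0[of y] by (cases "norm y < 1/4") auto
  qed
  also have "\<dots> < 0"
    using integral_bump_pos[where 'a='a] by simp
  finally show ?thesis .
qed

lemma uniform_on_notin_closed_hull:
  fixes L :: "'n::finite pt set" and P :: "nat \<Rightarrow> 'n pt" and w :: "nat \<Rightarrow> real"
  assumes G: "\<And>K. K \<in> G \<Longrightarrow> admissible_set K"
    and G_nonneg: "\<And>K y. K \<in> G \<Longrightarrow> norm y < 1/4 \<Longrightarrow> 0 \<le> (\<Sum>l<n. w l * indicator K (P l + y))"
    and L: "admissible_set L"
    and L_neg: "\<And>y. norm y < 1/4 \<Longrightarrow> (\<Sum>l<n. w l * indicator L (P l + y)) = -1"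
  shows "uniform_on L \<notin> closed_hull (uniform_on ` G)"
proof
  let ?g = "bump_combination n w P"
  have g: "?g \<in> borel_measurable borel"
    by (rule borel_measurable_continuous_onI[OF continuous_on_bump_combination])
  assume "uniform_on L \<in> closed_hull (uniform_on ` G)"
  then have "0 \<le> integral\<^sup>L (uniform_on L) ?g"
  proof (rule integral_nonneg_closed_hull[OF _ _ _ _ continuous_on_bump_combination bounded_bump_combination])
    fix M assume "M \<in> uniform_on ` G"
    then obtain K where K: "K \<in> G" "admissible_set K" and M: "M = uniform_on K"
      using G by blast
    then show "prob_space M" "\<exists>f. lebesgue_density M f"
      using prob_space_uniform_on lebesgue_density_uniform_on by blast+
    have "0 \<le> (\<integral>x. indicator K x * ?g x \<partial>lebesgue)"
      using K G_nonneg by (intro integral_indicator_bump_combination_nonneg) (auto simp: admissible_set_def)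
    then show "0 \<le> integral\<^sup>L M ?g"
      using K M g by (simp add: integral_uniform_on)
  qed
  moreover have "integral\<^sup>L (uniform_on L) ?g < 0"
  proof -
    have "(\<integral>x. indicator L x * ?g x \<partial>lebesgue) < 0"
      using L L_neg by (intro integral_indicator_bump_combination_neg) (auto simp: admissible_set_def)
    then show ?thesis
      using L g admissible_set_measure(2)[OF L] by (simp add: integral_uniform_on divide_neg_pos)
  qed
  ultimately show False
    by simp
qed

section \<open>The generating sets\<close>

lemma closed_segment_nth:
  fixes a b z :: "'n::finite pt"
  assumes "z \<in> closed_segment a b"
  shows "\<exists>u. 0 \<le> u \<and> u \<le> 1 \<and> (\<forall>k. z $ k = a $ k + u * (b $ k - a $ k))"
proof -
  obtain u where "0 \<le> u" "u \<le> 1" and z: "z = (1 - u) *\<^sub>R a + u *\<^sub>R b"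
    using assms unfolding closed_segment_def by blast
  moreover have "z $ k = a $ k + u * (b $ k - a $ k)" for k
    unfolding z by (simp add: algebra_simps)
  ultimately show ?thesis
    by blast
qed

lemma OU_set_rectangle:
  assumes R: "is_rectangle R" and "x0 \<in> R" and "R \<subseteq> orthant x0"
  shows "OU_set x0 R"
proof -
  obtain a b where R: "R = {x. \<forall>k. a $ k \<le> x $ k \<and> x $ k \<le> b $ k}"
    using R unfolding is_rectangle_def by blast
  have "x' \<in> R" if "x \<in> R" and x': "\<forall>k. x0 $ k \<le> x' $ k \<and> x' $ k \<le> x $ k" for x x'
  proof -
    have "a $ k \<le> x0 $ k" "x $ k \<le> b $ k" for k
      using \<open>x \<in> R\<close> \<open>x0 \<in> R\<close> unfolding R by blast+
    then show ?thesis
      using x' unfolding R by (blast intro: order_trans)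
  qed
  then show ?thesis
    unfolding OU_set_def using assms(3) by blast
qed

lemma star_shaped_OU_set:
  assumes K: "OU_set x0 K"
  shows "star_shaped_about x0 K"
  unfolding star_shaped_about_def
proof (intro ballI subsetI)
  fix x z assume x: "x \<in> K" and "z \<in> closed_segment x0 x"
  from this(2) obtain u where u: "0 \<le> u" "u \<le> 1" and z: "\<And>k. z $ k = x0 $ k + u * (x $ k - x0 $ k)"
    using closed_segment_nth by blast
  have "x0 $ k \<le> x $ k" for k
    using K x unfolding OU_set_def orthant_def by blast
  then have "x0 $ k \<le> z $ k \<and> z $ k \<le> x $ k" for k
    using u mult_left_le_one_le[of "x $ k - x0 $ k" u] unfolding z by simp
  then show "z \<in> K"
    using K x unfolding OU_set_def by blast
qed

lemma block_unimodal_subset_OU_unimodal: "block_unimodal x0 \<subseteq> OU_unimodal x0"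
proof -
  have "{R. admissible_set R \<and> is_rectangle R \<and> R \<subseteq> orthant x0 \<and> x0 \<in> R}
      \<subseteq> {K. admissible_set K \<and> OU_set x0 K}"
    using OU_set_rectangle by blast
  then show ?thesis
    unfolding block_unimodal_def OU_unimodal_def by (blast dest: closed_hull_mono[OF image_mono])
qed

lemma OU_unimodal_subset_star_unimodal: "OU_unimodal x0 \<subseteq> star_unimodal x0"
proof -
  have "{K. admissible_set K \<and> OU_set x0 K}
      \<subseteq> {K. admissible_set K \<and> K \<subseteq> orthant x0 \<and> star_shaped_about x0 K}"
    using star_shaped_OU_set by (auto simp: OU_set_def)
  then show ?thesis
    unfolding OU_unimodal_def star_unimodal_def by (blast dest: closed_hull_mono[OF image_mono])
qed

lemma admissible_setI:
  fixes K :: "'n::finite pt set"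
  assumes K: "K \<in> sets borel" "bounded K" and ball: "ball c r \<subseteq> K" and r: "0 < r"
  shows "admissible_set K"
proof -
  have "emeasure lborel (ball c r) \<noteq> 0"
    using content_ball_pos[OF r, of c] by (auto simp: measure_def)
  then have "0 < emeasure lborel (ball c r)"
    by (simp add: zero_less_iff_neq_zero)
  also have "\<dots> \<le> emeasure lborel K"
    using K ball by (intro emeasure_mono) auto
  finally show ?thesis
    using K emeasure_bounded_finite[OF K(2)] by (simp add: admissible_set_def)
qed

definition grid_point :: "'n::finite pt \<Rightarrow> 'n \<Rightarrow> 'n \<Rightarrow> real \<Rightarrow> real \<Rightarrow> 'n pt" where
  "grid_point x0 i j s t = (\<chi> k. x0 $ k + 1/2 + (if k = i then s else 0) + (if k = j then t else 0))"

lemma grid_point_nth [simp]: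
  "grid_point x0 i j s t $ k = x0 $ k + 1/2 + (if k = i then s else 0) + (if k = j then t else 0)"
  by (simp add: grid_point_def)

lemma abs_nth_less_of_norm_less:
  fixes y :: "real ^ 'n"
  shows "norm y < r \<Longrightarrow> \<bar>y $ k\<bar> < r"
  using component_le_norm_cart[of y k] by linarith

definition L_shape :: "'n::finite pt \<Rightarrow> 'n \<Rightarrow> 'n \<Rightarrow> 'n pt set" where
  "L_shape x0 i j = {x. (\<forall>k. x0 $ k \<le> x $ k \<and> x $ k \<le> x0 $ k + 2) \<and> (x $ i \<le> x0 $ i + 1 \<or> x $ j \<le> x0 $ j + 1)}"

definition wedge :: "'n::finite pt \<Rightarrow> 'n \<Rightarrow> 'n \<Rightarrow> 'n pt set" where
  "wedge x0 i j = {x. (\<forall>k. x0 $ k \<le> x $ k \<and> x $ k \<le> x0 $ k + 3) \<and> x $ j - x0 $ j \<le> x $ i - x0 $ i}"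

context
  fixes x0 :: "'n::finite pt" and i j :: 'n
  assumes ij: "i \<noteq> j"
begin

lemma grid_point_add_nth_ij:
  shows "(grid_point x0 i j s t + y) $ i = x0 $ i + 1/2 + s + y $ i"
    and "(grid_point x0 i j s t + y) $ j = x0 $ j + 1/2 + t + y $ j"
  using ij by simp_all

lemma mem_L_shape_grid_point:
  assumes y: "norm y < 1/4" and st: "s \<in> {0, 1}" "t \<in> {0, 1}"
  shows "grid_point x0 i j s t + y \<in> L_shape x0 i j \<longleftrightarrow> s = 0 \<or> t = 0"
proof -
  note yk = abs_nth_less_of_norm_less[OF y]
  have box: "\<forall>k. x0 $ k \<le> (grid_point x0 i j s t + y) $ k \<and> (grid_point x0 i j s t + y) $ k \<le> x0 $ k + 2"
    if "s = 0 \<or> t = 0"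
  proof
    fix k
    show "x0 $ k \<le> (grid_point x0 i j s t + y) $ k \<and> (grid_point x0 i j s t + y) $ k \<le> x0 $ k + 2"
      using yk[of k] st that by (auto simp: abs_less_iff)
  qed
  have "(grid_point x0 i j s t + y) $ i \<le> x0 $ i + 1 \<or> (grid_point x0 i j s t + y) $ j \<le> x0 $ j + 1
      \<longleftrightarrow> s = 0 \<or> t = 0"
    using yk[of i] yk[of j] st unfolding grid_point_add_nth_ij by (auto simp: abs_less_iff)
  then show ?thesis
    using box unfolding L_shape_def by blast
qed

lemma L_shape_mixed_difference:
  assumes "norm y < 1/4"
  shows "indicator (L_shape x0 i j) (grid_point x0 i j 0 0 + y) - indicator (L_shape x0 i j) (grid_point x0 i j 1 0 + y)
      - indicator (L_shape x0 i j) (grid_point x0 i j 0 1 + y) + indicator (L_shape x0 i j) (grid_point x0 i j 1 1 + y)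
      = (-1 :: real)"
  using mem_L_shape_grid_point[OF assms] by (simp add: indicator_def)

lemma rectangle_mixed_difference_nonneg:
  assumes R: "is_rectangle R" and "x0 \<in> R" and y: "norm y < 1/4"
  shows "0 \<le> indicator R (grid_point x0 i j 0 0 + y) - indicator R (grid_point x0 i j 1 0 + y)
      - indicator R (grid_point x0 i j 0 1 + y) + (indicator R (grid_point x0 i j 1 1 + y) :: real)"
proof -
  obtain a b where R: "R = {x. \<forall>k. a $ k \<le> x $ k \<and> x $ k \<le> b $ k}"
    using R unfolding is_rectangle_def by blast
  have a: "a $ k \<le> x0 $ k" for k
    using \<open>x0 \<in> R\<close> unfolding R by blast
  define A where "A s \<longleftrightarrow> x0 $ i + 1/2 + s + y $ i \<le> b $ i" for s
  define B where "B t \<longleftrightarrow> x0 $ j + 1/2 + t + y $ j \<le> b $ j" for t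
  define C where "C \<longleftrightarrow> (\<forall>k. k \<noteq> i \<longrightarrow> k \<noteq> j \<longrightarrow> x0 $ k + 1/2 + y $ k \<le> b $ k)"
  have mem: "grid_point x0 i j s t + y \<in> R \<longleftrightarrow> A s \<and> B t \<and> C" if "0 \<le> s" "0 \<le> t" for s t
  proof -
    have "a $ k \<le> (grid_point x0 i j s t + y) $ k" for k
      using a[of k] abs_nth_less_of_norm_less[OF y, of k] that by (auto simp: abs_less_iff)
    then have "grid_point x0 i j s t + y \<in> R \<longleftrightarrow> (\<forall>k. (grid_point x0 i j s t + y) $ k \<le> b $ k)"
      unfolding R by blast
    also have "\<dots> \<longleftrightarrow> A s \<and> B t \<and> C"
      unfolding A_def B_def C_def using ij by auto
    finally show ?thesis .
  qed
  have "A 1 \<Longrightarrow> A 0" "B 1 \<Longrightarrow> B 0"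
    unfolding A_def B_def by linarith+
  \<comment> \<open>The mixed difference factors as [C] ([A 0] - [A 1]) ([B 0] - [B 1]), and A, B are antitone.\<close>
  then show ?thesis
    using mem by (auto simp: indicator_def)
qed

lemma OU_set_difference_nonneg:
  assumes K: "OU_set x0 K" and y: "norm y < 1/4"
  shows "0 \<le> indicator K (grid_point x0 i j 0 1 + y) - (indicator K (grid_point x0 i j 2 1 + y) :: real)"
proof -
  have "x0 $ k \<le> (grid_point x0 i j 0 1 + y) $ k \<and> (grid_point x0 i j 0 1 + y) $ k \<le> (grid_point x0 i j 2 1 + y) $ k" for k
    using abs_nth_less_of_norm_less[OF y, of k] by (auto simp: abs_less_iff)
  then have "grid_point x0 i j 2 1 + y \<in> K \<Longrightarrow> grid_point x0 i j 0 1 + y \<in> K"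
    using K unfolding OU_set_def by blast
  then show ?thesis
    by (auto simp: indicator_def)
qed

lemma wedge_grid_points:
  assumes y: "norm y < 1/4"
  shows "grid_point x0 i j 2 1 + y \<in> wedge x0 i j" and "grid_point x0 i j 0 1 + y \<notin> wedge x0 i j"
proof -
  note yk = abs_nth_less_of_norm_less[OF y]
  note yi = yk[of i] and yj = yk[of j]
  have "x0 $ k \<le> (grid_point x0 i j 2 1 + y) $ k \<and> (grid_point x0 i j 2 1 + y) $ k \<le> x0 $ k + 3" for k
    using yk[of k] ij by (auto simp: abs_less_iff)
  then show "grid_point x0 i j 2 1 + y \<in> wedge x0 i j"
    using yi yj unfolding wedge_def mem_Collect_eq grid_point_add_nth_ij by auto
  show "grid_point x0 i j 0 1 + y \<notin> wedge x0 i j"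
    using yi yj unfolding wedge_def mem_Collect_eq grid_point_add_nth_ij by auto
qed

lemma wedge_difference:
  assumes "norm y < 1/4"
  shows "indicator (wedge x0 i j) (grid_point x0 i j 0 1 + y) - indicator (wedge x0 i j) (grid_point x0 i j 2 1 + y)
      = (-1 :: real)"
  using wedge_grid_points[OF assms] by simp

lemma admissible_L_shape: "admissible_set (L_shape x0 i j)"
proof (rule admissible_setI)
  show "L_shape x0 i j \<in> sets borel"
    unfolding L_shape_def by measurable
  show "bounded (L_shape x0 i j)"
    by (rule bounded_subset[OF bounded_cbox[of x0 "\<chi> k. x0 $ k + 2"]])
       (auto simp: L_shape_def mem_box_cart)
  show "ball (grid_point x0 i j 0 0) (1/4) \<subseteq> L_shape x0 i j"
  proof
    fix x assume "x \<in> ball (grid_point x0 i j 0 0) (1/4)"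
    then have "norm (x - grid_point x0 i j 0 0) < 1/4"
      by (simp add: dist_norm norm_minus_commute)
    from mem_L_shape_grid_point[OF this, of 0 0] show "x \<in> L_shape x0 i j"
      by simp
  qed
qed simp

lemma OU_set_L_shape: "OU_set x0 (L_shape x0 i j)"
  unfolding OU_set_def
proof (intro conjI ballI allI impI)
  show "L_shape x0 i j \<subseteq> orthant x0"
    unfolding L_shape_def orthant_def by auto
  fix x x' assume x: "x \<in> L_shape x0 i j" and x': "\<forall>k. x0 $ k \<le> x' $ k \<and> x' $ k \<le> x $ k"
  have "x0 $ k \<le> x' $ k \<and> x' $ k \<le> x0 $ k + 2" for k
  proof -
    have "x $ k \<le> x0 $ k + 2"
      using x unfolding L_shape_def by blast
    then show ?thesis
      using x'[rule_format, of k] by linarith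
  qed
  moreover have "x' $ i \<le> x0 $ i + 1 \<or> x' $ j \<le> x0 $ j + 1"
    using x x'[rule_format, of i] x'[rule_format, of j] unfolding L_shape_def by force
  ultimately show "x' \<in> L_shape x0 i j"
    unfolding L_shape_def by blast
qed

lemma admissible_wedge: "admissible_set (wedge x0 i j)"
proof (rule admissible_setI)
  show "wedge x0 i j \<in> sets borel"
    unfolding wedge_def by measurable
  show "bounded (wedge x0 i j)"
    by (rule bounded_subset[OF bounded_cbox[of x0 "\<chi> k. x0 $ k + 3"]])
       (auto simp: wedge_def mem_box_cart)
  show "ball (grid_point x0 i j 2 1) (1/4) \<subseteq> wedge x0 i j"
  proof
    fix x assume "x \<in> ball (grid_point x0 i j 2 1) (1/4)"
    then have "norm (x - grid_point x0 i j 2 1) < 1/4"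
      by (simp add: dist_norm norm_minus_commute)
    from wedge_grid_points(1)[OF this] show "x \<in> wedge x0 i j"
      by simp
  qed
qed simp

lemma wedge_subset_orthant: "wedge x0 i j \<subseteq> orthant x0"
  unfolding wedge_def orthant_def by auto

lemma star_shaped_wedge: "star_shaped_about x0 (wedge x0 i j)"
  unfolding star_shaped_about_def
proof (intro ballI subsetI)
  fix x z assume x: "x \<in> wedge x0 i j" and "z \<in> closed_segment x0 x"
  from this(2) obtain u where u: "0 \<le> u" "u \<le> 1" and z: "\<And>k. z $ k = x0 $ k + u * (x $ k - x0 $ k)"
    using closed_segment_nth by blast
  have "x0 $ k \<le> z $ k \<and> z $ k \<le> x0 $ k + 3" for k
  proof -
    have "x0 $ k \<le> x $ k \<and> x $ k \<le> x0 $ k + 3"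
      using x unfolding wedge_def by blast
    then have "0 \<le> x $ k - x0 $ k" "x $ k - x0 $ k \<le> 3"
      by auto
    then show ?thesis
      using u mult_left_le_one_le[of "x $ k - x0 $ k" u] unfolding z by simp
  qed
  moreover have "u * (x $ j - x0 $ j) \<le> u * (x $ i - x0 $ i)"
    using x u unfolding wedge_def by (auto intro: mult_left_mono)
  ultimately show "z \<in> wedge x0 i j"
    unfolding wedge_def using z by simp
qed

end

lemma L_shape_separates:
  fixes x0 :: "'n::finite pt"
  assumes ij: "i \<noteq> j"
  shows "uniform_on (L_shape x0 i j) \<in> OU_unimodal x0 - block_unimodal x0"
proof -
  let ?L = "L_shape x0 i j" and ?p = "grid_point x0 i j"
  let ?G = "{R. admissible_set R \<and> is_rectangle R \<and> R \<subseteq> orthant x0 \<and> x0 \<in> R}"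
  define P where "P = (!) [?p 0 0, ?p 1 0, ?p 0 1, ?p 1 1]"
  define w :: "nat \<Rightarrow> real" where "w = (!) [1, -1, -1, 1]"
  have sum: "(\<Sum>l<4. w l * indicator K (P l + y)) = indicator K (?p 0 0 + y) - indicator K (?p 1 0 + y)
      - indicator K (?p 0 1 + y) + indicator K (?p 1 1 + y)" for K y
    by (simp add: P_def w_def eval_nat_numeral)
  have "uniform_on ?L \<notin> closed_hull (uniform_on ` ?G)"
    by (rule uniform_on_notin_closed_hull[where G = ?G and n = 4 and w = w and P = P])
       (use ij rectangle_mixed_difference_nonneg admissible_L_shape L_shape_mixed_difference in \<open>auto simp: sum\<close>)
  moreover have "uniform_on ?L \<in> OU_unimodal x0"
    using admissible_L_shape[OF ij] OU_set_L_shape[OF ij]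
    unfolding OU_unimodal_def OU_set_def
    by (auto intro!: distr_on_uniform_on closed_hull_inc prob_space_uniform_on)
  ultimately show ?thesis
    unfolding block_unimodal_def by blast
qed

lemma wedge_separates:
  fixes x0 :: "'n::finite pt"
  assumes ij: "i \<noteq> j"
  shows "uniform_on (wedge x0 i j) \<in> star_unimodal x0 - OU_unimodal x0"
proof -
  let ?W = "wedge x0 i j" and ?p = "grid_point x0 i j"
  let ?G = "{K. admissible_set K \<and> OU_set x0 K}"
  define P where "P = (!) [?p 0 1, ?p 2 1]"
  define w :: "nat \<Rightarrow> real" where "w = (!) [1, -1]"
  have sum: "(\<Sum>l<2. w l * indicator K (P l + y)) = indicator K (?p 0 1 + y) - indicator K (?p 2 1 + y)" for K y
    by (simp add: P_def w_def eval_nat_numeral)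
  have "uniform_on ?W \<notin> closed_hull (uniform_on ` ?G)"
    by (rule uniform_on_notin_closed_hull[where G = ?G and n = 2 and w = w and P = P])
       (use ij OU_set_difference_nonneg admissible_wedge wedge_difference in \<open>auto simp: sum\<close>)
  moreover have "uniform_on ?W \<in> star_unimodal x0"
    using admissible_wedge[OF ij] wedge_subset_orthant[OF ij] star_shaped_wedge[OF ij]
    unfolding star_unimodal_def
    by (auto intro!: distr_on_uniform_on closed_hull_inc prob_space_uniform_on)
  ultimately show ?thesis
    unfolding OU_unimodal_def by blast
qed

theorem mainTheorem4:
  fixes x0 :: "real ^ 'n"
  assumes "CARD('n) \<ge> 2"
  shows "block_unimodal x0 \<subset> OU_unimodal x0 \<and> OU_unimodal x0 \<subset> star_unimodal x0"
proof -
  have "\<not> CARD('n) \<le> Suc 0"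
    using assms by simp
  then obtain i j :: 'n where ij: "i \<noteq> j"
    using card_le_Suc0_iff_eq[of "UNIV :: 'n set"] by auto
  show ?thesis
    using block_unimodal_subset_OU_unimodal OU_unimodal_subset_star_unimodal
      L_shape_separates[OF ij] wedge_separates[OF ij] by blast
qed

end
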